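(* Let $k\ge 2$, $N\ge 2$, and for $j=0,\ldots,k-1$ define the row vector $u_j\in\mathbb{R}^k$ by the generating function $$\sum_{i=0}^{k-1}u_j[i]\,x^i = \frac{(-1)^j\,|s(k,k-j)|}{k!}\,(x-1)^j\,A_{k-j}(x),$$ equivalently $u_j[i] = \frac{|s(k,k-j)|}{k!}\sum_{m=0}^{j}\binom{j}{m}(-1)^m A(k-j,i-m)$. Then $u_jT = N^{-j}u_j$ for every $j$. Moreover, if $v_j$ denotes the right eigenvector of $T$ for the eigenvalue $N^{-j}$ normalized by $v_j[0]=1$, then $\sum_{i}u_m[i]v_j[i]=\delta_{mj}$ for all $m,j\in\{0,\ldots,k-1\}$. In particular $u_0[i]=A(k,i)/k!$ and $u_{k-1}[i]=(-1)^i\binom{k-1}{i}/k$.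
   Context: Fix integers $k\ge 2$, $N\ge 2$. Let $H[c,c'] = \#\{(d_1,\ldots,d_k)\in\{0,\ldots,N-1\}^k : \lfloor (d_1+\cdots+d_k+c)/N\rfloor = c'\}$ for $c,c'\in\{0,\ldots,k-1\}$, and let $T=N^{-k}H$ (the row-stochastic Holte matrix of base-$N$ addition of $k$ summands). Its eigenvalues are $N^{-j}$, $j=0,\ldots,k-1$, all simple. $A(n,i)$ is the Eulerian number (number of permutations of $\{1,\ldots,n\}$ with exactly $i$ descents, and $0$ if $i<0$ or $i\ge n$), $A_n(x)=\sum_{i=0}^{n-1}A(n,i)x^i$ is the Eulerian polynomial, and $|s(k,m)|$ is the unsigned Stirling number of the first kind, i.e. the coefficient of $x^m$ in $x(x+1)\cdots(x+k-1)$. *)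

theory Defs
  imports Complex_Main "HOL-Combinatorics.Stirling"
begin

definition descents :: "nat list \<Rightarrow> nat" where
  "descents xs = card {j. Suc j < length xs \<and> xs ! j > xs ! Suc j}"

definition eulerian :: "nat \<Rightarrow> int \<Rightarrow> nat" where
  "eulerian n i = (if 0 \<le> i \<and> i < int n
     then card {xs. distinct xs \<and> set xs = {1..n} \<and> int (descents xs) = i}
     else 0)"

text \<open>Unsigned Stirling numbers of the first kind: library constant stirling
  (coefficients of the rising factorial, cf. lemma stirling_pochhammer).\<close>

definition holteH :: "nat \<Rightarrow> nat \<Rightarrow> nat \<Rightarrow> nat \<Rightarrow> nat" where
  "holteH k N c c' = card {ds :: nat list. length ds = k \<and> (\<forall>d\<in>set ds. d < N)
                              \<and> (sum_list ds + c) div N = c'}"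

definition holteT :: "nat \<Rightarrow> nat \<Rightarrow> nat \<Rightarrow> nat \<Rightarrow> real" where
  "holteT k N c c' = real (holteH k N c c') / real N ^ k"

definition uvec :: "nat \<Rightarrow> nat \<Rightarrow> nat \<Rightarrow> real" where
  "uvec k j i = real (stirling k (k - j)) / fact k *
     (\<Sum>m=0..j. real (j choose m) * (-1) ^ m * real (eulerian (k - j) (int i - int m)))"

end

(*
  Write u_j(x) for the generating polynomial of u_j and F_e(x) = sum_m (m+1)^e x^m.
  Inserting the largest letter into a permutation gives the Eulerian recurrence, and
  hence the Carlitz identity A_n(x) = (1-x)^(n+1) F_n(x); so u_j(x) is
  |s(k,k-j)|/k! times (1-x)^(k+1) F_(k-j)(x).

  Multiplying a row vector by H amounts to multiplying its generating polynomial by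
  D(x)^k, D(x) = 1 + x + ... + x^(N-1), and summing the coefficients in the window
  [c'N, c'N + N).  Since (1-x) D(x) = 1 - x^N, the window sum for u_j telescopes to
  W_N(c'N + N) - W_N(c'N), where W_N(t) = sum_i (-1)^i binom(k,i) max(0, t - Ni)^(k-j)
  satisfies W_N(tN) = N^(k-j) W_1(t); and W_1(c'+1) - W_1(c') is the c'-th
  coefficient of (1-x)^(k+1) F_(k-j)(x) itself.  Hence u_j H = N^(k-j) u_j, i.e.
  u_j T = N^(-j) u_j.

  Left and right eigenvectors for different eigenvalues are orthogonal, and
  sum_j u_j = e_0 because sum_j |s(k,k-j)| (m+1)^(k-j) is the rising factorial
  (m+1)^(k) = k! binom(m+k,k), whose generating function is k!/(1-x)^(k+1).
*)

theory Submission
  imports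
    Defs
    "HOL-Computational_Algebra.Formal_Power_Series"
    "HOL-Combinatorics.Multiset_Permutations"
begin

unbundle fps_syntax

section \<open>Descents and the Eulerian recurrence\<close>

lemma descents_Nil [simp]: "descents [] = 0"
  by (simp add: descents_def)

lemma descents_Cons:
  "descents (x # xs) = descents xs + (if xs \<noteq> [] \<and> hd xs < x then 1 else 0)"
proof -
  let ?S = "\<lambda>ys. {j. Suc j < length ys \<and> ys ! j > ys ! Suc j}"
  have split: "?S (x # xs) = (if xs \<noteq> [] \<and> hd xs < x then {0} else {}) \<union> Suc ` ?S xs"
  proof (rule set_eqI)
    fix j
    show "j \<in> ?S (x # xs) \<longleftrightarrow> j \<in> (if xs \<noteq> [] \<and> hd xs < x then {0} else {}) \<union> Suc ` ?S xs"
      by (cases j) (auto simp: hd_conv_nth)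
  qed
  have "finite (?S xs)"
    by (rule finite_subset[of _ "{..<length xs}"]) auto
  then have "card (?S (x # xs)) =
      card (if xs \<noteq> [] \<and> hd xs < x then {0::nat} else {}) + card (?S xs)"
    unfolding split by (subst card_Un_disjoint) (auto simp: card_image)
  then show ?thesis
    by (simp add: descents_def)
qed

lemma descents_append:
  "descents (xs @ ys) = descents xs + descents ys +
     (if xs \<noteq> [] \<and> ys \<noteq> [] \<and> hd ys < last xs then 1 else 0)"
  by (induction xs) (auto simp: descents_Cons)

lemma descents_le_length: "descents xs \<le> length xs - 1"
proof -
  have "{j. Suc j < length xs \<and> xs ! j > xs ! Suc j} \<subseteq> {..<length xs - 1}"
    by auto
  then show ?thesis
    unfolding descents_def by (metis card_lessThan card_mono finite_lessThan)
qed

lemma descents_insert_max: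
  assumes "\<forall>y\<in>set ys. y < x" "p \<le> length ys"
  shows "descents (take p ys @ x # drop p ys) =
         descents ys + (if p = length ys \<or> (0 < p \<and> ys ! p < ys ! (p - 1)) then 0 else 1)"
proof -
  let ?L = "take p ys" and ?R = "drop p ys"
  have last_L: "last ?L < x" if "?L \<noteq> []"
    using assms(1) that by (metis last_in_set in_set_takeD)
  have hd_R: "hd ?R < x" if "?R \<noteq> []"
    using assms(1) that by (metis hd_in_set in_set_dropD)
  have inserted: "descents (?L @ x # ?R) = descents ?L + descents ?R + (if ?R \<noteq> [] then 1 else 0)"
    using last_L hd_R by (auto simp: descents_append descents_Cons)
  have original: "descents ys = descents ?L + descents ?R +
      (if ?L \<noteq> [] \<and> ?R \<noteq> [] \<and> hd ?R < last ?L then 1 else 0)"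
    using descents_append[of ?L ?R] by simp
  consider "p = length ys" | "p = 0" "p < length ys" | "0 < p" "p < length ys"
    using assms(2) by (auto simp: le_less)
  then show ?thesis
  proof cases
    case 1
    then show ?thesis
      using inserted by simp
  next
    case 2
    then show ?thesis
      using inserted by simp
  next
    case 3
    then have "last ?L = ys ! (p - 1)"
      by (subst last_conv_nth) auto
    then have "hd ?R < last ?L \<longleftrightarrow> ys ! p < ys ! (p - 1)"
      using 3 by (simp add: hd_drop_conv_nth)
    moreover have "ys \<noteq> []"
      using 3 by auto
    ultimately show ?thesis
      using inserted original 3 by simp
  qed
qed

definition insert_at :: "'a \<Rightarrow> 'a list \<times> nat \<Rightarrow> 'a list" where
  "insert_at x = (\<lambda>(ys, p). take p ys @ x # drop p ys)"

lemma inj_on_insert_at: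
  assumes "x \<notin> A"
  shows "inj_on (insert_at x) (permutations_of_set A \<times> {..card A})"
proof (rule inj_onI, clarify)
  fix ys p ys' p'
  assume ys: "ys \<in> permutations_of_set A" "p \<le> card A"
    and ys': "ys' \<in> permutations_of_set A" "p' \<le> card A"
    and eq: "insert_at x (ys, p) = insert_at x (ys', p')"
  have "x \<notin> set (take p ys)" "x \<notin> set (drop p ys)"
    using ys assms by (auto dest: in_set_takeD in_set_dropD permutations_of_setD)
  with eq have "take p ys = take p' ys' \<and> drop p ys = drop p' ys'"
    unfolding insert_at_def by (metis append_Cons_eq_iff case_prod_conv)
  moreover have "length ys = card A" "length ys' = card A"
    using ys ys' by (auto simp: length_finite_permutations_of_set)
  ultimately show "ys = ys' \<and> p = p'"
    using ys ys' by (metis append_take_drop_id length_take min.absorb2)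
qed

lemma insert_at_image:
  assumes "x \<notin> A"
  shows "insert_at x ` (permutations_of_set A \<times> {..card A}) = permutations_of_set (insert x A)"
proof safe
  fix ys p
  assume ys: "ys \<in> permutations_of_set A" and "p \<le> card A"
  have "set (take p ys) \<inter> set (drop p ys) = {}" "x \<notin> set ys"
    using ys assms by (auto simp: set_take_disj_set_drop_if_distinct permutations_of_set_def)
  then have "distinct (take p ys @ x # drop p ys)"
    using ys by (auto simp: permutations_of_set_def dest: in_set_takeD in_set_dropD)
  moreover have "set (take p ys @ x # drop p ys) = insert x A"
    using ys by (metis Un_insert_right append_take_drop_id list.simps(15) permutations_of_setD(1) set_append)
  ultimately show "insert_at x (ys, p) \<in> permutations_of_set (insert x A)"
    by (auto simp: insert_at_def)
next
  fix xs
  assume xs: "xs \<in> permutations_of_set (insert x A)"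
  then obtain L R where LR: "xs = L @ x # R"
    by (metis insertI1 permutations_of_setD(1) split_list)
  with xs assms have "L @ R \<in> permutations_of_set A"
    by (auto simp: permutations_of_set_def)
  moreover from this have "length L \<le> card A"
    using length_finite_permutations_of_set by fastforce
  moreover have "xs = insert_at x (L @ R, length L)"
    using LR by (simp add: insert_at_def)
  ultimately show "xs \<in> insert_at x ` (permutations_of_set A \<times> {..card A})"
    by blast
qed

lemma card_descent_slots:
  "card {p \<in> {..length ys}. p = length ys \<or> (0 < p \<and> ys ! p < ys ! (p - 1))} = descents ys + 1"
proof -
  let ?n = "length ys"
  define D where "D = {j. Suc j < ?n \<and> ys ! Suc j < ys ! j}"
  have "{p \<in> {..?n}. p = ?n \<or> (0 < p \<and> ys ! p < ys ! (p - 1))} = insert ?n (Suc ` D)"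
  proof (rule set_eqI)
    fix p
    show "p \<in> {p \<in> {..?n}. p = ?n \<or> (0 < p \<and> ys ! p < ys ! (p - 1))} \<longleftrightarrow> p \<in> insert ?n (Suc ` D)"
      by (cases p) (auto simp: D_def)
  qed
  moreover have "?n \<notin> Suc ` D"
    by (auto simp: D_def)
  moreover have "finite D"
    by (rule finite_subset[of _ "{..<?n}"]) (auto simp: D_def)
  moreover have "descents ys = card D"
    by (simp add: descents_def D_def)
  ultimately show ?thesis
    by (simp add: card_image)
qed

lemma card_insert_max_positions:
  assumes "\<forall>y\<in>set ys. y < x"
  shows "card {p \<in> {..length ys}. descents (insert_at x (ys, p)) = d} =
    (if d = descents ys then descents ys + 1
     else if d = descents ys + 1 then length ys - descents ys else 0)"
proof -
  let ?n = "length ys"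
  define Z where "Z = {p \<in> {..?n}. p = ?n \<or> (0 < p \<and> ys ! p < ys ! (p - 1))}"
  have descents_at: "descents (insert_at x (ys, p)) = descents ys + (if p \<in> Z then 0 else 1)"
    if "p \<le> ?n" for p
    using descents_insert_max[OF assms that] that by (simp add: insert_at_def Z_def)
  have Z_sub: "Z \<subseteq> {..?n}"
    by (auto simp: Z_def)
  have card_Z: "card Z = descents ys + 1"
    unfolding Z_def by (rule card_descent_slots)
  then have card_nonZ: "card ({..?n} - Z) = ?n - descents ys"
    using Z_sub by (simp add: card_Diff_subset finite_subset[of Z "{..?n}"])
  consider "d = descents ys" | "d = descents ys + 1" | "d \<noteq> descents ys" "d \<noteq> descents ys + 1"
    by blast
  then show ?thesis
  proof cases
    case 1
    then have "{p \<in> {..?n}. descents (insert_at x (ys, p)) = d} = Z"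
      using descents_at Z_sub by (auto split: if_splits)
    then show ?thesis
      using 1 card_Z by simp
  next
    case 2
    then have "{p \<in> {..?n}. descents (insert_at x (ys, p)) = d} = {..?n} - Z"
      using descents_at by (auto split: if_splits)
    then show ?thesis
      using 2 card_nonZ by simp
  next
    case 3
    then have "{p \<in> {..?n}. descents (insert_at x (ys, p)) = d} = {}"
      using descents_at by auto
    then show ?thesis
      using 3 by simp
  qed
qed

text \<open>Unlike \<^const>\<open>eulerian\<close>, this counts the empty permutation (\<open>descent_count 0 0 = 1\<close>),
  so the recurrence \<open>descent_count_Suc\<close> holds from \<open>n = 0\<close> on.\<close>
definition descent_count :: "nat \<Rightarrow> nat \<Rightarrow> nat" where
  "descent_count n d = card {xs \<in> permutations_of_set {1..n}. descents xs = d}"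

lemma descent_count_0: "descent_count 0 d = (if d = 0 then 1 else 0)"
proof -
  have "{xs \<in> {[]}. descents xs = d} = (if d = 0 then {[]} else {})"
    by auto
  then show ?thesis
    by (simp add: descent_count_def)
qed

lemma eulerian_eq_descent_count:
  assumes "n \<ge> 1"
  shows "eulerian n (int d) = descent_count n d"
proof (cases "d < n")
  case True
  then show ?thesis
    by (simp add: eulerian_def descent_count_def permutations_of_set_def conj_commute conj_left_commute)
next
  case False
  have "descents xs \<noteq> d" if "xs \<in> permutations_of_set {1..n}" for xs
    using descents_le_length[of xs] length_finite_permutations_of_set[OF that] assms False
    by simp
  then show ?thesis
    using False by (simp add: eulerian_def descent_count_def)
qed

lemma descent_count_Suc_eq_sum:
  "descent_count (Suc n) d = (\<Sum>ys\<in>permutations_of_set {1..n}.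
     card {p \<in> {..n}. descents (insert_at (Suc n) (ys, p)) = d})"
proof -
  let ?P = "permutations_of_set {1..n}" and ?ins = "insert_at (Suc n)"
  let ?A = "{a \<in> ?P \<times> {..n}. descents (?ins a) = d}"
  have bij: "bij_betw ?ins (?P \<times> {..n}) (permutations_of_set {1..Suc n})"
    using inj_on_insert_at[of "Suc n" "{1..n}"] insert_at_image[of "Suc n" "{1..n}"]
    by (simp add: bij_betw_def atLeastAtMostSuc_conv)
  then have "{xs \<in> permutations_of_set {1..Suc n}. descents xs = d} = ?ins ` ?A"
    by (auto simp: bij_betw_def)
  moreover have "inj_on ?ins ?A"
    using bij by (auto simp: bij_betw_def intro: inj_on_subset)
  ultimately have "descent_count (Suc n) d = card ?A"
    by (simp add: descent_count_def card_image)
  also have "?A = Sigma ?P (\<lambda>ys. {p \<in> {..n}. descents (?ins (ys, p)) = d})"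
    by auto
  finally show ?thesis
    by simp
qed

lemma descent_count_Suc:
  "real (descent_count (Suc n) d) = (real d + 1) * real (descent_count n d) +
     (if d = 0 then 0 else (real n + 1 - real d) * real (descent_count n (d - 1)))"
proof -
  let ?P = "permutations_of_set {1..n}"
  have "real (card {p \<in> {..n}. descents (insert_at (Suc n) (ys, p)) = d}) =
      (if descents ys = d then real d + 1 else 0) +
      (if d \<noteq> 0 \<and> descents ys = d - 1 then real n + 1 - real d else 0)" if "ys \<in> ?P" for ys
  proof -
    have len: "length ys = n" and below: "\<forall>y\<in>set ys. y < Suc n"
      using that by (auto simp: length_finite_permutations_of_set permutations_of_set_def)
    from below have "card {p \<in> {..length ys}. descents (insert_at (Suc n) (ys, p)) = d} =
        (if d = descents ys then descents ys + 1
         else if d = descents ys + 1 then length ys - descents ys else 0)"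
      by (rule card_insert_max_positions)
    moreover have "descents ys \<le> n"
      using descents_le_length[of ys] len by simp
    ultimately show ?thesis
      using len by auto
  qed
  then have "real (descent_count (Suc n) d) =
      (\<Sum>ys\<in>?P. (if descents ys = d then real d + 1 else 0) +
                 (if d \<noteq> 0 \<and> descents ys = d - 1 then real n + 1 - real d else 0))"
    unfolding descent_count_Suc_eq_sum of_nat_sum by (rule sum.cong[OF refl])
  also have "\<dots> = (real d + 1) * real (descent_count n d) +
     (if d = 0 then 0 else (real n + 1 - real d) * real (descent_count n (d - 1)))"
    by (simp add: sum.distrib descent_count_def sum.inter_filter[symmetric] conj_commute)
  finally show ?thesis .
qed

section \<open>The Carlitz identity\<close>

definition eulerian_fps :: "nat \<Rightarrow> real fps" where
  "eulerian_fps n = Abs_fps (\<lambda>d. real (descent_count n d))"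

definition power_fps :: "nat \<Rightarrow> 'a::comm_semiring_1 fps" where
  "power_fps e = Abs_fps (\<lambda>m. of_nat (m + 1) ^ e)"

definition eulerian_step :: "nat \<Rightarrow> 'a::comm_ring_1 fps \<Rightarrow> 'a fps" where
  "eulerian_step n g = g + of_nat n * fps_X * g + fps_X * (1 - fps_X) * fps_deriv g"

lemma eulerian_step_nth_Suc:
  "eulerian_step n g $ Suc i = of_nat (i + 2) * g $ Suc i + (of_nat n - of_nat i) * g $ i"
  by (simp add: eulerian_step_def algebra_simps fps_of_nat[symmetric])

lemma eulerian_fps_Suc: "eulerian_fps (Suc n) = eulerian_step n (eulerian_fps n)"
proof (rule fps_ext)
  fix i
  show "eulerian_fps (Suc n) $ i = eulerian_step n (eulerian_fps n) $ i"
    using descent_count_Suc[of n i]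
    by (cases i) (auto simp: eulerian_fps_def eulerian_step_def eulerian_step_nth_Suc algebra_simps)
qed

lemma power_fps_Suc: "power_fps (Suc e) = fps_deriv (fps_X * power_fps e)"
  by (rule fps_ext) (simp add: power_fps_def algebra_simps)

lemma eulerian_step_one_minus_X_power_mult:
  "(1 - fps_X) ^ Suc (Suc n) * power_fps (Suc n) =
     eulerian_step n ((1 - fps_X) ^ Suc n * (power_fps n :: 'a::comm_ring_1 fps))"
proof -
  define Y where "Y = (1 - fps_X :: 'a fps) ^ n"
  define F where "F = (power_fps n :: 'a fps)"
  have "fps_deriv ((1 - fps_X) * Y) = - (of_nat n + 1) * Y"
    unfolding Y_def power_Suc[symmetric] by (simp only: fps_deriv_power' diff_Suc_1) (simp add: algebra_simps)
  then have deriv: "fps_deriv ((1 - fps_X) * Y * F) = (1 - fps_X) * Y * fps_deriv F - (of_nat n + 1) * Y * F"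
    by (simp only: fps_deriv_mult[of "(1 - fps_X) * Y" F]) (simp add: algebra_simps)
  have "(1 - fps_X) ^ Suc (Suc n) * power_fps (Suc n) =
      (1 - fps_X) * (1 - fps_X) * Y * (F + fps_X * fps_deriv F)"
    by (simp add: Y_def F_def power_fps_Suc algebra_simps)
  also have "\<dots> = eulerian_step n ((1 - fps_X) * Y * F)"
    unfolding eulerian_step_def deriv by (simp add: algebra_simps)
  finally show ?thesis
    by (simp add: Y_def F_def)
qed

lemma eulerian_fps_eq: "eulerian_fps n = (1 - fps_X) ^ Suc n * power_fps n"
proof (induction n)
  case 0
  show ?case
  proof (rule fps_ext)
    fix i
    show "eulerian_fps 0 $ i = ((1 - fps_X) ^ Suc 0 * power_fps 0) $ i"
      by (cases i) (simp_all add: eulerian_fps_def power_fps_def descent_count_0 algebra_simps)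
  qed
next
  case (Suc n)
  then show ?case
    by (simp only: eulerian_fps_Suc eulerian_step_one_minus_X_power_mult)
qed

section \<open>The Holte matrix acting on generating functions\<close>

definition digit_lists :: "nat \<Rightarrow> nat \<Rightarrow> nat \<Rightarrow> nat list set" where
  "digit_lists k N s = {ds. length ds = k \<and> (\<forall>d\<in>set ds. d < N) \<and> sum_list ds = s}"

definition digit_fps :: "nat \<Rightarrow> 'a::comm_semiring_1 fps" where
  "digit_fps N = (\<Sum>d<N. fps_X ^ d)"

lemma finite_digit_lists: "finite (digit_lists k N s)"
proof (rule finite_subset)
  show "digit_lists k N s \<subseteq> {ds. set ds \<subseteq> {..<N} \<and> length ds = k}"
    by (auto simp: digit_lists_def)
qed (rule finite_lists_length_eq, simp)

lemma digit_lists_Suc_hd: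
  "{ds \<in> digit_lists (Suc k) N s. hd ds = d} =
     (if d < N \<and> d \<le> s then Cons d ` digit_lists k N (s - d) else {})"
  by (auto simp: digit_lists_def length_Suc_conv)

lemma card_digit_lists: "of_nat (card (digit_lists k N s)) = (digit_fps N ^ k :: 'a::comm_semiring_1 fps) $ s"
proof (induction k arbitrary: s)
  case 0
  have "digit_lists 0 N s = (if s = 0 then {[]} else {})"
    by (auto simp: digit_lists_def)
  then show ?case
    by simp
next
  case (Suc k)
  have "hd ` digit_lists (Suc k) N s \<subseteq> {..<N}"
    by (auto simp: digit_lists_def length_Suc_conv)
  then have "card (digit_lists (Suc k) N s) = (\<Sum>d<N. card {ds \<in> digit_lists (Suc k) N s. hd ds = d})"
    using sum.group[of "digit_lists (Suc k) N s" "{..<N}" hd "\<lambda>_. 1 :: nat"]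
    by (simp add: finite_digit_lists)
  also have "\<dots> = (\<Sum>d<N. if d \<le> s then card (digit_lists k N (s - d)) else 0)"
    by (rule sum.cong) (auto simp: digit_lists_Suc_hd card_image)
  finally have "of_nat (card (digit_lists (Suc k) N s)) =
      (\<Sum>d<N. if d \<le> s then (digit_fps N ^ k :: 'a fps) $ (s - d) else 0)"
    by (simp add: Suc.IH if_distrib[of of_nat] cong: if_cong)
  also have "\<dots> = (\<Sum>d<N. (fps_X ^ d * digit_fps N ^ k :: 'a fps) $ s)"
    by (rule sum.cong) (auto simp: fps_X_power_mult_nth)
  also have "\<dots> = (digit_fps N ^ Suc k :: 'a fps) $ s"
    by (simp only: power_Suc digit_fps_def[of N] sum_distrib_right fps_sum_nth)
  finally show ?case .
qed

lemma sum_list_le_length_mult: "\<forall>d\<in>set ds. d < N \<Longrightarrow> sum_list ds \<le> length ds * (N - 1)"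
  by (induction ds) auto

lemma digit_fps_power_nth_eq_0:
  assumes "k * (N - 1) < s"
  shows "(digit_fps N ^ k :: 'a::comm_semiring_1 fps) $ s = 0"
proof -
  have "digit_lists k N s = {}"
    using assms sum_list_le_length_mult by (fastforce simp: digit_lists_def)
  then show ?thesis
    using card_digit_lists[of k N s, where 'a = 'a] by simp
qed

lemma holteH_eq_sum_digit_lists:
  "holteH k N c c' = (\<Sum>s\<le>k * (N - 1). if (s + c) div N = c' then card (digit_lists k N s) else 0)"
proof -
  let ?A = "{ds. length ds = k \<and> (\<forall>d\<in>set ds. d < N) \<and> (sum_list ds + c) div N = c'}"
  have "sum_list ` ?A \<subseteq> {..k * (N - 1)}"
    using sum_list_le_length_mult by fastforce
  moreover have "finite ?A"
    by (rule finite_subset[of _ "{ds. set ds \<subseteq> {..<N} \<and> length ds = k}"])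
       (auto intro: finite_lists_length_eq)
  ultimately have "holteH k N c c' = (\<Sum>s\<le>k * (N - 1). card {ds \<in> ?A. sum_list ds = s})"
    using sum.group[of ?A "{..k * (N - 1)}" sum_list "\<lambda>_. 1 :: nat"] by (simp add: holteH_def)
  moreover have "card {ds \<in> ?A. sum_list ds = s} =
      (if (s + c) div N = c' then card (digit_lists k N s) else 0)" for s
  proof -
    have "{ds \<in> ?A. sum_list ds = s} = (if (s + c) div N = c' then digit_lists k N s else {})"
      by (auto simp: digit_lists_def)
    then show ?thesis
      by simp
  qed
  ultimately show ?thesis
    by simp
qed

lemma sum_fps_nth_mult_weighted:
  fixes f g :: "'a::comm_semiring_1 fps"
  assumes "\<forall>i\<ge>a. f $ i = 0" "\<forall>j\<ge>b. g $ j = 0"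
  shows "(\<Sum>i<a. \<Sum>j<b. f $ i * g $ j * w (i + j)) = (\<Sum>t<a + b. (f * g) $ t * w t)"
proof -
  let ?h = "\<lambda>i j. f $ i * g $ j * w (i + j)"
  have "(\<Sum>i<a. \<Sum>j<b. ?h i j) = (\<Sum>(i, j)\<in>{..<a} \<times> {..<b}. ?h i j)"
    by (simp add: sum.cartesian_product)
  also have "\<dots> = (\<Sum>(i, j)\<in>{(i, j). i + j < a + b}. ?h i j)"
  proof (rule sum.mono_neutral_left)
    show "finite {(i, j). i + j < a + b}"
      by (rule finite_subset[of _ "{..<a + b} \<times> {..<a + b}"]) auto
    have "?h i j = 0" if "\<not> (i < a \<and> j < b)" for i j
      using assms that by (auto simp: not_less)
    then show "\<forall>x\<in>{(i, j). i + j < a + b} - {..<a} \<times> {..<b}. (case x of (i, j) \<Rightarrow> ?h i j) = 0"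
      by auto
  qed auto
  also have "\<dots> = (\<Sum>t<a + b. \<Sum>i\<le>t. ?h i (t - i))"
    by (rule sum.triangle_reindex)
  also have "\<dots> = (\<Sum>t<a + b. (f * g) $ t * w t)"
    by (simp add: fps_mult_nth atLeast0AtMost sum_distrib_right)
  finally show ?thesis .
qed

lemma div_eq_iff_mult_le_less:
  fixes N :: nat
  assumes "N > 0"
  shows "t div N = c \<longleftrightarrow> c * N \<le> t \<and> t < c * N + N"
  using assms
  by (metis add.commute div_nat_eqI div_times_less_eq_dividend dividend_less_div_times mult.commute mult_Suc)

lemma sum_fps_nth_mult_holteH:
  fixes f :: "real fps"
  assumes "N \<ge> 1" "c' < k" "\<forall>c\<ge>k. f $ c = 0"
  shows "(\<Sum>c<k. f $ c * real (holteH k N c c')) = (\<Sum>t\<in>{c' * N..<c' * N + N}. (f * digit_fps N ^ k) $ t)"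
proof -
  define w where "w t = (if t div N = c' then 1 else 0 :: real)" for t
  let ?D = "digit_fps N ^ k :: real fps" and ?b = "Suc (k * (N - 1))"
  have "(\<Sum>c<k. f $ c * real (holteH k N c c')) = (\<Sum>c<k. \<Sum>s<?b. f $ c * ?D $ s * w (c + s))"
    by (auto simp: holteH_eq_sum_digit_lists card_digit_lists[where 'a = real, symmetric]
        lessThan_Suc_atMost sum_distrib_left w_def add.commute intro!: sum.cong)
  also have "\<dots> = (\<Sum>t<k + ?b. (f * ?D) $ t * w t)"
    by (rule sum_fps_nth_mult_weighted) (use assms(3) digit_fps_power_nth_eq_0 in \<open>auto simp: Suc_le_eq\<close>)
  also have "\<dots> = (\<Sum>t\<in>{t \<in> {..<k + ?b}. t div N = c'}. (f * ?D) $ t)"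
    by (simp only: sum.inter_filter[OF finite_lessThan]) (rule sum.cong, simp_all add: w_def)
  also have "{t \<in> {..<k + ?b}. t div N = c'} = {c' * N..<c' * N + N}"
  proof -
    have "c' * N + N \<le> k * N"
      using assms(2) by (metis Suc_leI add.commute mult_Suc mult_le_mono1)
    moreover have "k + k * (N - 1) = k * N"
      using assms(1) by (cases N) auto
    ultimately show ?thesis
      using assms(1) by (auto simp: div_eq_iff_mult_le_less)
  qed
  finally show ?thesis .
qed

section \<open>The left eigenvectors\<close>

lemma one_minus_X_power_pow:
  "(1 - fps_X ^ N :: 'a::comm_ring_1 fps) ^ k =
     (\<Sum>i\<le>k. fps_const ((-1) ^ i * of_nat (k choose i)) * fps_X ^ (N * i))"
proof -
  have "(1 - fps_X ^ N :: 'a fps) ^ k = (\<Sum>i\<le>k. of_nat (k choose i) * (- (fps_X ^ N)) ^ i * 1 ^ (k - i))"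
    using binomial_ring[of "- (fps_X ^ N) :: 'a fps" 1 k] by simp
  also have "\<dots> = (\<Sum>i\<le>k. fps_const ((-1) ^ i * of_nat (k choose i)) * fps_X ^ (N * i))"
  proof (rule sum.cong)
    fix i
    have "fps_const ((-1 :: 'a) ^ i) = (-1) ^ i"
      by (simp only: fps_const_neg [symmetric] fps_const_power [symmetric] fps_const_1_eq_1)
    then have "(- (fps_X ^ N :: 'a fps)) ^ i = fps_const ((-1) ^ i) * fps_X ^ (N * i)"
      by (simp add: power_minus[of "fps_X ^ N"] power_mult)
    then show "of_nat (k choose i) * (- (fps_X ^ N :: 'a fps)) ^ i * 1 ^ (k - i) =
        fps_const ((-1) ^ i * of_nat (k choose i)) * fps_X ^ (N * i)"
      by (simp only: fps_const_mult[symmetric] fps_of_nat power_one mult_1_right mult_1_left mult_ac)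
  qed simp
  finally show ?thesis .
qed

lemma one_minus_X_power_pow_mult_nth:
  "((1 - fps_X ^ N) ^ k * g :: 'a::comm_ring_1 fps) $ t =
     (\<Sum>i\<le>k. (-1) ^ i * of_nat (k choose i) * (if N * i \<le> t then g $ (t - N * i) else 0))"
  unfolding one_minus_X_power_pow sum_distrib_right fps_sum_nth
  by (rule sum.cong) (simp_all add: mult.assoc fps_X_power_mult_nth not_less)

lemma one_minus_X_pow_nth: "((1 - fps_X) ^ j :: 'a::comm_ring_1 fps) $ m = (-1) ^ m * of_nat (j choose m)"
proof -
  have "((1 - fps_X ^ 1) ^ j * 1 :: 'a fps) $ m =
      (\<Sum>i\<le>j. (-1) ^ i * of_nat (j choose i) * (if 1 * i \<le> m then (1 :: 'a fps) $ (m - 1 * i) else 0))"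
    by (rule one_minus_X_power_pow_mult_nth)
  also have "\<dots> = (\<Sum>i\<le>j. if i = m then (-1) ^ i * of_nat (j choose i) else 0)"
    by (rule sum.cong) auto
  finally show ?thesis
    by (simp add: binomial_eq_0 not_le)
qed

lemma fps_nth_one_minus_X_mult:
  "((1 - fps_X) * Q :: 'a::comm_ring_1 fps) $ t = (fps_X * Q) $ Suc t - (fps_X * Q) $ t"
  by (simp add: left_diff_distrib)

lemma sum_fps_nth_one_minus_X_mult:
  fixes Q :: "'a::comm_ring_1 fps"
  assumes "a \<le> b"
  shows "(\<Sum>t\<in>{a..<b}. ((1 - fps_X) * Q) $ t) = (fps_X * Q) $ b - (fps_X * Q) $ a"
  unfolding fps_nth_one_minus_X_mult by (rule sum_Suc_diff'[OF assms])

text \<open>The natural-number subtraction \<open>t - N * i\<close> truncates at 0, so for \<open>e \<ge> 1\<close>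
  the terms with \<open>N * i > t\<close> vanish.\<close>
definition truncated_power_sum :: "nat \<Rightarrow> nat \<Rightarrow> nat \<Rightarrow> nat \<Rightarrow> real" where
  "truncated_power_sum N k e t = (\<Sum>i\<le>k. (-1) ^ i * real (k choose i) * real (t - N * i) ^ e)"

lemma truncated_power_sum_mult:
  "truncated_power_sum N k e (n * N) = real N ^ e * truncated_power_sum 1 k e n"
proof -
  have "real (n * N - N * i) ^ e = real N ^ e * real (n - i) ^ e" for i
  proof -
    have "n * N - N * i = N * (n - i)"
      by (simp add: diff_mult_distrib2 mult.commute)
    then show ?thesis
      by (simp add: power_mult_distrib)
  qed
  then show ?thesis
    by (simp add: truncated_power_sum_def sum_distrib_left mult_ac)
qed

lemma fps_nth_eq_truncated_power_sum:
  assumes "e \<ge> 1"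
  shows "(fps_X * ((1 - fps_X ^ N) ^ k * power_fps e)) $ t = truncated_power_sum N k e t"
proof -
  have "(fps_X * ((1 - fps_X ^ N) ^ k * power_fps e)) $ t = ((1 - fps_X ^ N) ^ k * (fps_X * power_fps e)) $ t"
    by (simp only: mult.left_commute)
  also have "\<dots> = truncated_power_sum N k e t"
    unfolding one_minus_X_power_pow_mult_nth truncated_power_sum_def
    using assms by (intro sum.cong) (auto simp: power_fps_def)
  finally show ?thesis .
qed

definition uvec_fps :: "nat \<Rightarrow> nat \<Rightarrow> real fps" where
  "uvec_fps k j = (1 - fps_X) ^ Suc k * power_fps (k - j)"

lemma uvec_fps_eq_eulerian_fps:
  "j < k \<Longrightarrow> uvec_fps k j = (1 - fps_X) ^ j * eulerian_fps (k - j)"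
  by (simp add: uvec_fps_def eulerian_fps_eq mult.assoc flip: power_add)

lemma uvec_fps_nth:
  "j < k \<Longrightarrow> uvec_fps k j $ c = (\<Sum>m\<le>c. (-1) ^ m * real (j choose m) * real (descent_count (k - j) (c - m)))"
  by (simp add: uvec_fps_eq_eulerian_fps fps_mult_nth atLeast0AtMost one_minus_X_pow_nth eulerian_fps_def)

lemma uvec_fps_nth_eq_0:
  assumes "j < k" "k \<le> c"
  shows "uvec_fps k j $ c = 0"
proof -
  have zero: "(-1) ^ m * real (j choose m) * real (descent_count (k - j) (c - m)) = 0" for m
  proof (cases "m \<le> j")
    case True
    then have "descent_count (k - j) (c - m) = 0"
      using eulerian_eq_descent_count[of "k - j" "c - m"] assms by (simp add: eulerian_def)
    then show ?thesis
      by simp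
  qed (simp add: binomial_eq_0)
  then show ?thesis
    unfolding uvec_fps_nth[OF assms(1)] by (intro sum.neutral) blast
qed

lemma uvec_eq_uvec_fps_nth:
  assumes "j < k"
  shows "uvec k j c = real (stirling k (k - j)) / fact k * uvec_fps k j $ c"
proof -
  define g where
    "g m = (if m \<le> c then (-1) ^ m * real (j choose m) * real (descent_count (k - j) (c - m)) else 0)"
    for m
  have "real (eulerian (k - j) (int c - int m)) =
      (if m \<le> c then real (descent_count (k - j) (c - m)) else 0)" for m
    using assms eulerian_eq_descent_count[of "k - j" "c - m"] by (auto simp: eulerian_def)
  then have "(\<Sum>m=0..j. real (j choose m) * (-1) ^ m * real (eulerian (k - j) (int c - int m))) =
      (\<Sum>m=0..j. g m)"
    by (auto simp: g_def intro!: sum.cong)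
  also have "\<dots> = (\<Sum>m=0..c + j. g m)"
    by (rule sum.mono_neutral_left) (auto simp: g_def binomial_eq_0)
  also have "\<dots> = (\<Sum>m=0..c. g m)"
    by (rule sum.mono_neutral_right) (auto simp: g_def)
  also have "\<dots> = uvec_fps k j $ c"
    by (simp add: uvec_fps_nth[OF assms] atLeast0AtMost g_def)
  finally show ?thesis
    by (simp add: uvec_def)
qed

lemma uvec_fps_nth_eq_truncated_power_sum:
  assumes "j < k"
  shows "uvec_fps k j $ c = truncated_power_sum 1 k (k - j) (Suc c) - truncated_power_sum 1 k (k - j) c"
proof -
  define Q where "Q = (1 - fps_X ^ 1) ^ k * (power_fps (k - j) :: real fps)"
  have "uvec_fps k j = (1 - fps_X) * Q"
    by (simp add: uvec_fps_def Q_def mult.assoc)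
  then have "uvec_fps k j $ c = (fps_X * Q) $ Suc c - (fps_X * Q) $ c"
    by (simp only: fps_nth_one_minus_X_mult)
  then show ?thesis
    using assms unfolding Q_def by (simp only: fps_nth_eq_truncated_power_sum)
qed

lemma uvec_fps_mult_digit_fps_power:
  "uvec_fps k j * digit_fps N ^ k = (1 - fps_X) * ((1 - fps_X ^ N) ^ k * power_fps (k - j))"
proof -
  have "(1 - fps_X ^ N :: real fps) = (1 - fps_X) * digit_fps N"
    unfolding digit_fps_def by (rule one_diff_power_eq)
  then show ?thesis
    by (simp add: uvec_fps_def power_mult_distrib mult_ac)
qed

lemma uvec_left_eigen:
  assumes "N \<ge> 1" "j < k" "c' < k"
  shows "(\<Sum>c<k. uvec k j c * holteT k N c c') = uvec k j c' / real N ^ j"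
proof -
  let ?e = "k - j" and ?s = "real (stirling k (k - j)) / fact k" and ?W = "truncated_power_sum"
  have "(\<Sum>c<k. uvec k j c * holteT k N c c') =
      ?s / real N ^ k * (\<Sum>c<k. uvec_fps k j $ c * real (holteH k N c c'))"
    by (simp add: uvec_eq_uvec_fps_nth[OF assms(2)] holteT_def sum_distrib_left mult_ac)
  also have "(\<Sum>c<k. uvec_fps k j $ c * real (holteH k N c c')) =
      (\<Sum>t\<in>{c' * N..<c' * N + N}. ((1 - fps_X) * ((1 - fps_X ^ N) ^ k * power_fps ?e)) $ t)"
    using sum_fps_nth_mult_holteH[OF assms(1,3)] uvec_fps_nth_eq_0[OF assms(2)]
    by (simp add: uvec_fps_mult_digit_fps_power)
  also have "\<dots> = ?W N k ?e (c' * N + N) - ?W N k ?e (c' * N)"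
    using assms(2)
    by (simp only: sum_fps_nth_one_minus_X_mult[OF le_add1] fps_nth_eq_truncated_power_sum)
  also have "\<dots> = real N ^ ?e * (?W 1 k ?e (Suc c') - ?W 1 k ?e c')"
    using truncated_power_sum_mult[of N k ?e "Suc c'"] truncated_power_sum_mult[of N k ?e c']
    by (simp add: algebra_simps)
  also have "\<dots> = real N ^ ?e * uvec_fps k j $ c'"
    by (simp only: uvec_fps_nth_eq_truncated_power_sum[OF assms(2)])
  finally show ?thesis
    using assms by (simp add: uvec_eq_uvec_fps_nth power_diff)
qed

section \<open>Biorthogonality\<close>

lemma pochhammer_of_nat_plus_1: "pochhammer (of_nat m + 1 :: 'a::field_char_0) k = fact k * of_nat (m + k choose k)"
  by (simp add: binomial_gbinomial gbinomial_pochhammer')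

lemma one_minus_X_pow_mult_binomial_fps:
  "(1 - fps_X) ^ Suc k * Abs_fps (\<lambda>m. of_nat (m + k choose k)) = (1 :: 'a::field_char_0 fps)"
proof -
  have "Suc k + m - 1 choose m = m + k choose k" for m
    using binomial_symmetric[of m "m + k"] by (simp add: add.commute)
  then have "inverse ((1 - fps_const 1 * fps_X) ^ Suc k) = Abs_fps (\<lambda>m. of_nat (m + k choose k) :: 'a)"
    using one_minus_const_fps_X_neg_power'[of "Suc k" 1] by simp
  then show ?thesis
    using inverse_mult_eq_1'[of "(1 - fps_X :: 'a fps) ^ Suc k"] by simp
qed

lemma sum_stirling_mult_power:
  assumes "k \<ge> 1"
  shows "(\<Sum>j<k. of_nat (stirling k (k - j)) * x ^ (k - j)) = pochhammer (x :: 'a::comm_semiring_1) k"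
proof -
  have "(\<Sum>j<k. of_nat (stirling k (k - j)) * x ^ (k - j)) = (\<Sum>l\<in>{1..k}. of_nat (stirling k l) * x ^ l)"
    by (rule sum.reindex_bij_witness[where i = "\<lambda>l. k - l" and j = "\<lambda>j. k - j"]) auto
  also have "\<dots> = (\<Sum>l\<le>k. of_nat (stirling k l) * x ^ l)"
    using assms by (simp add: atMost_atLeast0 sum.atLeast_Suc_atMost)
  also have "\<dots> = pochhammer x k"
    by (rule stirling_pochhammer)
  finally show ?thesis .
qed

lemma sum_uvec:
  assumes "k \<ge> 1"
  shows "(\<Sum>j<k. uvec k j i) = (if i = 0 then 1 else 0)"
proof -
  define s where "s j = real (stirling k (k - j)) / fact k" for j
  have binomial_gf: "(\<Sum>j<k. fps_const (s j) * power_fps (k - j)) = Abs_fps (\<lambda>m. of_nat (m + k choose k))"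
  proof (rule fps_ext)
    fix m
    have "(\<Sum>j<k. fps_const (s j) * power_fps (k - j)) $ m =
        (\<Sum>j<k. real (stirling k (k - j)) * (real m + 1) ^ (k - j)) / fact k"
      by (simp add: fps_sum_nth s_def power_fps_def sum_divide_distrib add.commute)
    also have "\<dots> = real (m + k choose k)"
      using sum_stirling_mult_power[OF assms, of "real m + 1"] pochhammer_of_nat_plus_1[of m k, where 'a = real] by simp
    finally show "(\<Sum>j<k. fps_const (s j) * power_fps (k - j)) $ m = Abs_fps (\<lambda>m. of_nat (m + k choose k)) $ m"
      by simp
  qed
  have "(\<Sum>j<k. fps_const (s j) * uvec_fps k j) =
      (1 - fps_X) ^ Suc k * Abs_fps (\<lambda>m. of_nat (m + k choose k))"
    by (simp add: uvec_fps_def sum_distrib_left mult.left_commute flip: binomial_gf)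
  also have "\<dots> = 1"
    by (rule one_minus_X_pow_mult_binomial_fps)
  finally have "(\<Sum>j<k. fps_const (s j) * uvec_fps k j) $ i = (if i = 0 then 1 else 0)"
    by simp
  moreover have "(\<Sum>j<k. fps_const (s j) * uvec_fps k j) $ i = (\<Sum>j<k. uvec k j i)"
    unfolding fps_sum_nth fps_mult_left_const_nth by (rule sum.cong) (simp_all add: uvec_eq_uvec_fps_nth s_def)
  ultimately show ?thesis
    by simp
qed

lemma left_right_eigenvectors_orthogonal:
  fixes A :: "nat \<Rightarrow> nat \<Rightarrow> 'a::field"
  assumes "\<And>c'. c' < n \<Longrightarrow> (\<Sum>c<n. u c * A c c') = a * u c'"
    and "\<And>c. c < n \<Longrightarrow> (\<Sum>c'<n. A c c' * v c') = b * v c"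
    and "a \<noteq> b"
  shows "(\<Sum>i<n. u i * v i) = 0"
proof -
  have "a * (\<Sum>i<n. u i * v i) = (\<Sum>c'<n. (\<Sum>c<n. u c * A c c') * v c')"
    unfolding sum_distrib_left by (intro sum.cong) (simp_all add: assms(1))
  also have "\<dots> = (\<Sum>c<n. u c * (\<Sum>c'<n. A c c' * v c'))"
    unfolding sum_distrib_left sum_distrib_right by (subst sum.swap) (simp add: mult.assoc)
  also have "\<dots> = (\<Sum>c<n. u c * (b * v c))"
    by (intro sum.cong) (simp_all add: assms(2))
  also have "\<dots> = b * (\<Sum>i<n. u i * v i)"
    by (simp add: sum_distrib_left mult.left_commute)
  finally show ?thesis
    using assms(3) by (metis mult_right_cancel)
qed

lemma uvec_biorthogonal:
  assumes "N \<ge> 2" "m < k" "j < k"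
    and right_eigen: "\<forall>c<k. (\<Sum>c'<k. holteT k N c c' * v c') = v c / real N ^ j"
  shows "(\<Sum>i<k. uvec k m i * v i) = (if m = j then v 0 else 0)"
proof -
  have orth: "(\<Sum>i<k. uvec k m' i * v i) = 0" if "m' < k" "m' \<noteq> j" for m'
  proof (rule left_right_eigenvectors_orthogonal)
    show "(\<Sum>c<k. uvec k m' c * holteT k N c c') = inverse (real N ^ m') * uvec k m' c'" if "c' < k" for c'
      using uvec_left_eigen[of N m' k c'] assms(1) \<open>m' < k\<close> that by (simp add: divide_inverse_commute)
    show "(\<Sum>c'<k. holteT k N c c' * v c') = inverse (real N ^ j) * v c" if "c < k" for c
      using right_eigen that by (simp add: divide_inverse_commute)
    show "inverse (real N ^ m') \<noteq> inverse (real N ^ j)"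
      using assms(1) \<open>m' \<noteq> j\<close> by simp
  qed
  show ?thesis
  proof (cases "m = j")
    case True
    have "(\<Sum>m'<k. \<Sum>i<k. uvec k m' i * v i) = (\<Sum>m'<k. if m' = m then \<Sum>i<k. uvec k m i * v i else 0)"
      using orth True by (intro sum.cong) auto
    then have "(\<Sum>i<k. uvec k m i * v i) = (\<Sum>m'<k. \<Sum>i<k. uvec k m' i * v i)"
      using assms(2) by simp
    also have "\<dots> = (\<Sum>i<k. (\<Sum>m'<k. uvec k m' i) * v i)"
      unfolding sum_distrib_right by (rule sum.swap)
    also have "\<dots> = (\<Sum>i<k. if i = 0 then v i else 0)"
      using assms(2) by (intro sum.cong) (simp_all add: sum_uvec)
    also have "\<dots> = v 0"
      using assms(2) by simp
    finally show ?thesis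
      using True by simp
  qed (use orth assms(2) in simp)
qed

lemma eulerian_Suc_0: "eulerian (Suc 0) i = (if i = 0 then 1 else 0)"
proof (cases "i < 0")
  case False
  then obtain d where "i = int d"
    by (metis nonneg_int_cases not_less)
  moreover have "real (descent_count 1 d) = (if d = 0 then 1 else 0)"
    using descent_count_Suc[of 0 d] by (simp add: descent_count_0)
  then have "descent_count 1 d = (if d = 0 then 1 else 0)"
    by (simp split: if_splits)
  ultimately show ?thesis
    using eulerian_eq_descent_count[of 1 d] by simp
qed (simp add: eulerian_def)

lemma uvec_last:
  assumes "i < k"
  shows "uvec k (k - 1) i = (-1) ^ i * real ((k - 1) choose i) / real k"
proof -
  obtain n where k: "k = Suc n"
    using assms by (cases k) auto
  have "(\<Sum>m=0..n. real (n choose m) * (-1) ^ m * real (eulerian (Suc 0) (int i - int m))) =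
      (\<Sum>m=0..n. if m = i then real (n choose m) * (-1) ^ m else 0)"
    by (intro sum.cong) (auto simp: eulerian_Suc_0)
  also have "\<dots> = real (n choose i) * (-1) ^ i"
    using assms k by simp
  finally have "(\<Sum>m=0..n. real (n choose m) * (-1) ^ m * real (eulerian (Suc 0) (int i - int m))) =
      real (n choose i) * (-1) ^ i" .
  moreover have "real (stirling k (k - (k - 1))) = fact n"
    using stirling_Suc_n_1[of n] by (simp add: k)
  ultimately show ?thesis
    unfolding uvec_def by (simp add: k)
qed

theorem mainTheorem3:
  fixes k N :: nat
  assumes "k \<ge> 2" and "N \<ge> 2"
  shows "(\<forall>j<k. \<forall>c'<k.
            (\<Sum>c<k. uvec k j c * holteT k N c c') = uvec k j c' / real N ^ j)
       \<and> (\<forall>m<k. \<forall>j<k. \<forall>v :: nat \<Rightarrow> real.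
            (\<forall>c<k. (\<Sum>c'<k. holteT k N c c' * v c') = v c / real N ^ j) \<and> v 0 = 1
            \<longrightarrow> (\<Sum>i<k. uvec k m i * v i) = (if m = j then 1 else 0))
       \<and> (\<forall>i<k. uvec k 0 i = real (eulerian k (int i)) / fact k)
       \<and> (\<forall>i<k. uvec k (k - 1) i = (-1) ^ i * real ((k - 1) choose i) / real k)"
proof (intro conjI allI impI)
  fix j c'
  assume "j < k" "c' < k"
  then show "(\<Sum>c<k. uvec k j c * holteT k N c c') = uvec k j c' / real N ^ j"
    using uvec_left_eigen assms(2) by simp
next
  fix m j and v :: "nat \<Rightarrow> real"
  assume "m < k" "j < k"
    and "(\<forall>c<k. (\<Sum>c'<k. holteT k N c c' * v c') = v c / real N ^ j) \<and> v 0 = 1"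
  then show "(\<Sum>i<k. uvec k m i * v i) = (if m = j then 1 else 0)"
    using uvec_biorthogonal[OF assms(2)] by simp
next
  fix i
  show "uvec k 0 i = real (eulerian k (int i)) / fact k"
    by (simp add: uvec_def)
next
  fix i
  assume "i < k"
  then show "uvec k (k - 1) i = (-1) ^ i * real ((k - 1) choose i) / real k"
    by (rule uvec_last)
qed

end
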